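(* Let $X$ be a complex Banach space, let $\theta\in(-\pi,\pi]$ and let $\Omega\subset\mathbb{C}$ be a neighbourhood of the point $\mathrm{e}^{\mathrm{i}\theta}$. For $r\in(0,1)$ let $$\Omega_{r,\theta}:=\left\{\lambda\in\mathbb{C}:\left|\lambda-\mathrm{e}^{\mathrm{i}\theta}\frac{1+r^2}{1-r^2}\right|\leq\frac{2r}{1-r^2}\right\}.$$ Then there exists a constant $C>0$ with the following property: if $r\in(0,\tfrac14)$ is such that $\Omega_{2r,\theta}\subset\Omega$, and if $F:\Omega\to X$ is a holomorphic function such that, for some constant $B>0$, $\|F(\lambda)\|\leq B\,|1-|\lambda||^{-1}$ for all $\lambda\in\partial\Omega_{2r,\theta}\setminus\mathbb{T}$, then $\|F(\lambda)\|\leq BCr^{-1}$ for all $\lambda\in\Omega_{r,\theta}$.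
   Context: $\mathbb{T}$ is the unit circle and $\partial$ denotes the boundary of a set. *)

theory Defs
  imports "HOL-Analysis.Analysis"
begin

text \<open>A complex Banach space is modelled as a real Banach space (type class banach)
  together with a real-linear map J (multiplication by i) with J (J x) = -x and such that the
  induced complex scalar multiplication is norm-homogeneous.\<close>

definition cscale :: "('a::real_vector \<Rightarrow> 'a) \<Rightarrow> complex \<Rightarrow> 'a \<Rightarrow> 'a" where
  "cscale J c x = Re c *\<^sub>R x + Im c *\<^sub>R J x"

definition complex_structure :: "('a::real_normed_vector \<Rightarrow> 'a) \<Rightarrow> bool" where
  "complex_structure J \<longleftrightarrow> linear J \<and> (\<forall>x. J (J x) = - x) \<and>
     (\<forall>c x. norm (cscale J c x) = cmod c * norm x)"

definition vholomorphic_on ::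
  "('a::real_normed_vector \<Rightarrow> 'a) \<Rightarrow> (complex \<Rightarrow> 'a) \<Rightarrow> complex set \<Rightarrow> bool" where
  "vholomorphic_on J F S \<longleftrightarrow>
     (\<forall>z\<in>S. \<exists>D. (F has_derivative (\<lambda>h. cscale J h D)) (at z within S))"

definition Omega_disc :: "real \<Rightarrow> real \<Rightarrow> complex set" where
  "Omega_disc r \<theta> = cball (cis \<theta> * complex_of_real ((1 + r\<^sup>2) / (1 - r\<^sup>2))) (2 * r / (1 - r\<^sup>2))"

end

theory Submission
  imports Defs "HOL-Complex_Analysis.Complex_Analysis"
begin

text \<open>Rotating by cis \<theta> and pulling back along the Cayley transform (1 + \<zeta>) / (1 - \<zeta>), the disc
  |\<zeta>| \<le> s becomes Omega_disc s \<theta> and the imaginary axis becomes the unit circle; near 0 the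
  distance of the image from the unit circle is comparable to |Re \<zeta>|. For scalar F the hypothesis
  thus turns into a bound B' / |Re \<zeta>| on the circle |\<zeta>| = 2 r. There \<zeta>^2 + (2 r)^2 = 2 (Re \<zeta>) \<zeta>,
  so the product of F with this polynomial is bounded by a multiple of B r on the circle, and the
  maximum modulus principle gives |F| \<le> C B / r on |\<zeta>| \<le> r, where the polynomial is of size r^2.
  Vector-valued F are reduced to the scalar case by a complex-linear norming functional, which
  is obtained from the Hahn--Banach theorem.\<close>

definition sublinear :: "('a::real_vector \<Rightarrow> real) \<Rightarrow> bool" where
  "sublinear q \<longleftrightarrow> (\<forall>x y. q (x + y) \<le> q x + q y) \<and> (\<forall>t x. 0 \<le> t \<longrightarrow> q (t *\<^sub>R x) = t * q x)"

lemma sublinear_add_le: "sublinear q \<Longrightarrow> q (x + y) \<le> q x + q y"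
  unfolding sublinear_def by blast

lemma sublinear_scaleR: "sublinear q \<Longrightarrow> 0 \<le> t \<Longrightarrow> q (t *\<^sub>R x) = t * q x"
  unfolding sublinear_def by blast

lemma sublinearI:
  assumes add: "\<And>x y. q (x + y) \<le> q x + q y"
    and scale: "\<And>t x. 0 \<le> t \<Longrightarrow> q (t *\<^sub>R x) \<le> t * q x"
  shows "sublinear q"
  unfolding sublinear_def
proof (intro conjI allI impI add)
  fix t :: real and x assume t: "0 \<le> t"
  show "q (t *\<^sub>R x) = t * q x"
  proof (cases "t = 0")
    case True
    have "q 0 \<le> 0" using scale[of 0 0] by simp
    moreover have "q 0 \<le> q 0 + q 0" using add[of 0 0] by simp
    ultimately show ?thesis using True by simp
  next
    case False
    have "q x = q (inverse t *\<^sub>R (t *\<^sub>R x))" using False by simp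
    also have "\<dots> \<le> inverse t * q (t *\<^sub>R x)" using t by (intro scale) simp
    finally have "t * q x \<le> q (t *\<^sub>R x)" using t False by (simp add: field_simps)
    with scale[OF t, of x] show ?thesis by simp
  qed
qed

lemma sublinear_zero: "sublinear q \<Longrightarrow> q 0 = 0"
  using sublinear_scaleR[of q 0 0] by simp

lemma sublinear_neg_le: "sublinear q \<Longrightarrow> - q (- x) \<le> q x"
  using sublinear_add_le[of q x "- x"] sublinear_zero[of q] by simp

lemma sublinear_norm: "sublinear (norm :: 'a::real_normed_vector \<Rightarrow> real)"
  by (rule sublinearI) (simp_all add: norm_triangle_ineq)

text \<open>Pushing a sublinear functional q down in direction y gives a sublinear functional below q
  that is odd along y; hence a minimal sublinear functional is linear.\<close>

definition sublinear_reduce :: "('a::real_vector \<Rightarrow> real) \<Rightarrow> 'a \<Rightarrow> 'a \<Rightarrow> real" where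
  "sublinear_reduce q y x = Inf ((\<lambda>t. q (x + t *\<^sub>R y) - t * q y) ` {0..})"

lemma sublinear_reduce_le:
  assumes q: "sublinear q" and t: "0 \<le> t"
  shows "sublinear_reduce q y x \<le> q (x + t *\<^sub>R y) - t * q y"
  unfolding sublinear_reduce_def
proof (rule cInf_lower)
  show "bdd_below ((\<lambda>t. q (x + t *\<^sub>R y) - t * q y) ` {0..})"
  proof (rule bdd_belowI2)
    fix u :: real assume "u \<in> {0..}"
    then have "q (u *\<^sub>R y) = u * q y" by (simp add: sublinear_scaleR[OF q])
    moreover have "q (u *\<^sub>R y) \<le> q (x + u *\<^sub>R y) + q (- x)"
      using sublinear_add_le[OF q, of "x + u *\<^sub>R y" "- x"] by simp
    ultimately show "- q (- x) \<le> q (x + u *\<^sub>R y) - u * q y" by simp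
  qed
qed (use t in simp)

lemma sublinear_reduce_greatest:
  assumes "\<And>t. 0 \<le> t \<Longrightarrow> c \<le> q (x + t *\<^sub>R y) - t * q y"
  shows "c \<le> sublinear_reduce q y x"
  unfolding sublinear_reduce_def using assms by (intro cInf_greatest) auto

lemma sublinear_reduce_le_self: "sublinear q \<Longrightarrow> sublinear_reduce q y x \<le> q x"
  using sublinear_reduce_le[of q 0 y x] by simp

lemma sublinear_reduce_neg: "sublinear q \<Longrightarrow> sublinear_reduce q y (- y) \<le> - q y"
  using sublinear_reduce_le[of q 1 y "- y"] sublinear_zero[of q] by simp

lemma sublinear_sublinear_reduce:
  assumes q: "sublinear q"
  shows "sublinear (sublinear_reduce q y)"
proof (rule sublinearI)
  fix x1 x2
  have "sublinear_reduce q y (x1 + x2) - sublinear_reduce q y x2 \<le> sublinear_reduce q y x1"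
  proof (rule sublinear_reduce_greatest)
    fix t1 :: real assume t1: "0 \<le> t1"
    have "sublinear_reduce q y (x1 + x2) - q (x1 + t1 *\<^sub>R y) + t1 * q y \<le> sublinear_reduce q y x2"
    proof (rule sublinear_reduce_greatest)
      fix t2 :: real assume t2: "0 \<le> t2"
      have "sublinear_reduce q y (x1 + x2) \<le> q ((x1 + t1 *\<^sub>R y) + (x2 + t2 *\<^sub>R y)) - (t1 + t2) * q y"
        using sublinear_reduce_le[OF q, of "t1 + t2" y "x1 + x2"] t1 t2
        by (simp add: algebra_simps)
      also have "\<dots> \<le> q (x1 + t1 *\<^sub>R y) + q (x2 + t2 *\<^sub>R y) - (t1 + t2) * q y"
        using sublinear_add_le[OF q] by simp
      finally show "sublinear_reduce q y (x1 + x2) - q (x1 + t1 *\<^sub>R y) + t1 * q y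
          \<le> q (x2 + t2 *\<^sub>R y) - t2 * q y"
        by (simp add: algebra_simps)
    qed
    then show "sublinear_reduce q y (x1 + x2) - sublinear_reduce q y x2
        \<le> q (x1 + t1 *\<^sub>R y) - t1 * q y" by simp
  qed
  then show "sublinear_reduce q y (x1 + x2) \<le> sublinear_reduce q y x1 + sublinear_reduce q y x2"
    by simp
next
  fix t :: real and x assume t: "0 \<le> t"
  show "sublinear_reduce q y (t *\<^sub>R x) \<le> t * sublinear_reduce q y x"
  proof (cases "t = 0")
    case True
    then show ?thesis using sublinear_reduce_le_self[OF q, of y 0] sublinear_zero[OF q] by simp
  next
    case False
    with t have "0 < t" by simp
    have "sublinear_reduce q y (t *\<^sub>R x) / t \<le> sublinear_reduce q y x"
    proof (rule sublinear_reduce_greatest)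
      fix u :: real assume "0 \<le> u"
      then have "sublinear_reduce q y (t *\<^sub>R x) \<le> q (t *\<^sub>R (x + u *\<^sub>R y)) - (t * u) * q y"
        using sublinear_reduce_le[OF q, of "t * u" y "t *\<^sub>R x"] t by (simp add: scaleR_add_right)
      also have "\<dots> = t * (q (x + u *\<^sub>R y) - u * q y)"
        using sublinear_scaleR[OF q t, of "x + u *\<^sub>R y"] by (simp add: algebra_simps)
      finally show "sublinear_reduce q y (t *\<^sub>R x) / t \<le> q (x + u *\<^sub>R y) - u * q y"
        using \<open>0 < t\<close> by (simp add: divide_simps mult.commute)
    qed
    then show ?thesis using \<open>0 < t\<close> by (simp add: divide_simps mult.commute)
  qed
qed

lemma minimal_sublinear_imp_linear:
  assumes m: "sublinear m" and minimal: "\<And>q. sublinear q \<Longrightarrow> (\<And>x. q x \<le> m x) \<Longrightarrow> q = m"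
  shows "linear m"
proof -
  have neg: "m (- y) = - m y" for y
  proof -
    have "sublinear_reduce m y = m"
      using minimal[OF sublinear_sublinear_reduce[OF m]] sublinear_reduce_le_self[OF m] by blast
    then have "m (- y) \<le> - m y" using sublinear_reduce_neg[OF m, of y] by simp
    with sublinear_neg_le[OF m, of y] show ?thesis by simp
  qed
  have add: "m (x + y) = m x + m y" for x y
    using sublinear_add_le[OF m, of "x + y" "- y"] sublinear_add_le[OF m, of x y] neg[of y] by simp
  have scale: "m (t *\<^sub>R x) = t * m x" for t x
  proof (cases "0 \<le> t")
    case True then show ?thesis by (rule sublinear_scaleR[OF m])
  next
    case False
    then have "m ((- t) *\<^sub>R x) = (- t) * m x" by (intro sublinear_scaleR[OF m]) simp
    then show ?thesis using neg[of "t *\<^sub>R x"] by simp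
  qed
  show ?thesis by (rule linearI) (simp_all add: add scale)
qed

lemma sublinear_Inf_chain:
  assumes ne: "C \<noteq> {}" and sub: "\<And>q. q \<in> C \<Longrightarrow> sublinear q"
    and bdd: "\<And>x. bdd_below ((\<lambda>q. q x) ` C)"
    and chain: "\<And>a b. a \<in> C \<Longrightarrow> b \<in> C \<Longrightarrow> (\<forall>x. a x \<le> b x) \<or> (\<forall>x. b x \<le> a x)"
  shows "sublinear (\<lambda>x. Inf ((\<lambda>q. q x) ` C))" (is "sublinear ?u")
proof -
  have lower: "?u x \<le> q x" if "q \<in> C" for q x
    using that bdd by (intro cInf_lower) auto
  have greatest: "c \<le> ?u x" if "\<And>q. q \<in> C \<Longrightarrow> c \<le> q x" for c x
    using that ne by (intro cInf_greatest) auto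
  show ?thesis
  proof (rule sublinearI)
    fix x y
    have "?u (x + y) - ?u y \<le> ?u x"
    proof (rule greatest)
      fix q1 assume q1: "q1 \<in> C"
      have "?u (x + y) - q1 x \<le> ?u y"
      proof (rule greatest)
        fix q2 assume q2: "q2 \<in> C"
        \<comment> \<open>use the smaller of q1 and q2 for both summands\<close>
        from chain[OF q1 q2] show "?u (x + y) - q1 x \<le> q2 y"
          using lower[OF q1, of "x + y"] lower[OF q2, of "x + y"]
            sublinear_add_le[OF sub[OF q1], of x y] sublinear_add_le[OF sub[OF q2], of x y]
          by (smt (verit))
      qed
      then show "?u (x + y) - ?u y \<le> q1 x" by simp
    qed
    then show "?u (x + y) \<le> ?u x + ?u y" by simp
  next
    fix t :: real and x assume t: "0 \<le> t"
    show "?u (t *\<^sub>R x) \<le> t * ?u x"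
    proof (cases "t = 0")
      case True
      obtain q where "q \<in> C" using ne by blast
      then show ?thesis using True lower[of q 0] sublinear_zero[OF sub[of q]] by simp
    next
      case False
      with t have "0 < t" by simp
      have "?u (t *\<^sub>R x) / t \<le> ?u x"
      proof (rule greatest)
        fix q assume q: "q \<in> C"
        then have "?u (t *\<^sub>R x) \<le> t * q x" using lower sublinear_scaleR[OF sub t] by metis
        then show "?u (t *\<^sub>R x) / t \<le> q x" using \<open>0 < t\<close> by (simp add: divide_simps mult.commute)
      qed
      then show ?thesis using \<open>0 < t\<close> by (simp add: divide_simps mult.commute)
    qed
  qed
qed

lemma sublinear_ge_neg_norm:
  assumes "sublinear q" "\<And>x. q x \<le> norm x"
  shows "- norm x \<le> q x"
  using sublinear_neg_le[OF assms(1), of x] assms(2)[of "- x"] by simp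

text \<open>Hahn--Banach: a minimal sublinear functional below the reduction of the norm in
  direction x0 (Zorn) is linear, dominated by the norm, and attains the norm at x0.\<close>

lemma exists_norming_functional:
  fixes x0 :: "'a::real_normed_vector"
  shows "\<exists>l. linear l \<and> (\<forall>x. l x \<le> norm x) \<and> l x0 = norm x0"
proof -
  define p0 where "p0 = sublinear_reduce (norm :: 'a \<Rightarrow> real) x0"
  have p0: "sublinear p0" unfolding p0_def by (rule sublinear_sublinear_reduce[OF sublinear_norm])
  have p0_le_norm: "p0 x \<le> norm x" for x
    unfolding p0_def by (rule sublinear_reduce_le_self[OF sublinear_norm])
  define A where "A = {q. sublinear q \<and> (\<forall>x. q x \<le> p0 x)}"
  define above where "above = (\<lambda>a b :: 'a \<Rightarrow> real. \<forall>x. b x \<le> a x)"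
  have po: "partial_order_on A (relation_of above A)"
    by (rule partial_order_on_relation_ofI)
      (simp_all add: above_def fun_eq_iff, meson order_trans, meson antisym)
  have chain_bound: "\<exists>u \<in> A. \<forall>a \<in> C. above a u" if C: "C \<in> Chains (relation_of above A)" for C
  proof (cases "C = {}")
    case True
    then show ?thesis using p0 by (auto simp: A_def)
  next
    case False
    have CA: "C \<subseteq> A" and chain: "\<And>a b. a \<in> C \<Longrightarrow> b \<in> C \<Longrightarrow> above a b \<or> above b a"
      using C unfolding Chains_def relation_of_def by auto
    define u where "u = (\<lambda>x. Inf ((\<lambda>q. q x) ` C))"
    have C_sub: "sublinear q" and C_le: "q x \<le> p0 x" if "q \<in> C" for q x
      using that CA by (auto simp: A_def)
    have bdd: "bdd_below ((\<lambda>q. q x) ` C)" for x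
    proof (rule bdd_belowI2)
      fix q assume q: "q \<in> C"
      have "q y \<le> norm y" for y using C_le[OF q, of y] p0_le_norm[of y] by linarith
      then show "- norm x \<le> q x" by (rule sublinear_ge_neg_norm[OF C_sub[OF q]])
    qed
    have lower: "u x \<le> q x" if "q \<in> C" for q x
      unfolding u_def using that bdd by (intro cInf_lower) auto
    have "sublinear u"
      unfolding u_def using False C_sub bdd chain by (intro sublinear_Inf_chain) (auto simp: above_def)
    moreover obtain q where q: "q \<in> C" using False by blast
    have "u x \<le> p0 x" for x using order_trans[OF lower[OF q] C_le[OF q]] .
    ultimately have "u \<in> A" by (simp add: A_def)
    then show ?thesis using lower by (auto simp: above_def)
  qed
  obtain m where "m \<in> A" and maximal: "\<And>a. a \<in> A \<Longrightarrow> above m a \<Longrightarrow> a = m"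
    using predicate_Zorn[OF po chain_bound] by blast
  then have m: "sublinear m" and m_le: "\<And>x. m x \<le> p0 x" by (auto simp: A_def)
  have lin: "linear m"
  proof (rule minimal_sublinear_imp_linear[OF m])
    fix q assume "sublinear q" "\<And>x. q x \<le> m x"
    then show "q = m" using maximal m_le by (simp add: A_def above_def) (meson order_trans)
  qed
  have le: "m x \<le> norm x" for x using m_le[of x] p0_le_norm[of x] by simp
  have "- m x0 \<le> - norm x0"
    using m_le[of "- x0"] sublinear_reduce_neg[OF sublinear_norm, of x0] linear_neg[OF lin, of x0]
    by (simp add: p0_def)
  then have "m x0 = norm x0" using le[of x0] by simp
  then show ?thesis using lin le by blast
qed

lemma nonneg_le_iff_eq_iff_of_square_diff:
  fixes a b c d k :: real
  assumes "0 \<le> a" "0 \<le> b" "0 \<le> c" "0 \<le> d" "0 < k"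
    and diff: "a\<^sup>2 - b\<^sup>2 = k * (c\<^sup>2 - d\<^sup>2)"
  shows "a \<le> b \<longleftrightarrow> c \<le> d" and "a = b \<longleftrightarrow> c = d"
proof -
  have "a \<le> b \<longleftrightarrow> a\<^sup>2 \<le> b\<^sup>2" "c \<le> d \<longleftrightarrow> c\<^sup>2 \<le> d\<^sup>2"
    using assms by (simp_all add: power2_le_iff_abs_le)
  moreover have "a\<^sup>2 - b\<^sup>2 \<le> 0 \<longleftrightarrow> c\<^sup>2 - d\<^sup>2 \<le> 0"
    unfolding diff using \<open>0 < k\<close> by (simp add: mult_le_0_iff)
  ultimately show "a \<le> b \<longleftrightarrow> c \<le> d" by simp
  have "a = b \<longleftrightarrow> a\<^sup>2 = b\<^sup>2" "c = d \<longleftrightarrow> c\<^sup>2 = d\<^sup>2"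
    using assms by simp_all
  moreover have "a\<^sup>2 - b\<^sup>2 = 0 \<longleftrightarrow> c\<^sup>2 - d\<^sup>2 = 0"
    unfolding diff using \<open>0 < k\<close> by simp
  ultimately show "a = b \<longleftrightarrow> c = d" by simp
qed

text \<open>The disc Omega_disc s 0 is the Apollonius disc {l. |l - 1| \<le> s |l + 1|}.\<close>

lemma apollonius_identity:
  fixes l :: complex and s :: real
  assumes "s\<^sup>2 \<noteq> 1"
  shows "(cmod (l - 1))\<^sup>2 - (s * cmod (l + 1))\<^sup>2 =
    (1 - s\<^sup>2) * ((cmod (l - of_real ((1 + s\<^sup>2) / (1 - s\<^sup>2))))\<^sup>2 - (2 * s / (1 - s\<^sup>2))\<^sup>2)"
proof -
  define c where "c = (1 + s\<^sup>2) / (1 - s\<^sup>2)"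
  define \<rho> where "\<rho> = 2 * s / (1 - s\<^sup>2)"
  have nz: "1 - s\<^sup>2 \<noteq> 0" using assms by simp
  have c: "(1 - s\<^sup>2) * c = 1 + s\<^sup>2" unfolding c_def using nz by simp
  have "c\<^sup>2 - \<rho>\<^sup>2 = ((1 + s\<^sup>2)\<^sup>2 - (2 * s)\<^sup>2) / (1 - s\<^sup>2)\<^sup>2"
    unfolding c_def \<rho>_def by (simp add: power_divide diff_divide_distrib)
  also have "(1 + s\<^sup>2)\<^sup>2 - (2 * s)\<^sup>2 = (1 - s\<^sup>2)\<^sup>2" by (simp add: power2_eq_square algebra_simps)
  finally have c\<rho>: "c\<^sup>2 - \<rho>\<^sup>2 = 1" using nz by simp
  obtain x y where l: "l = Complex x y" by (cases l)
  have "(1 - s\<^sup>2) * ((x - c)\<^sup>2 + y\<^sup>2 - \<rho>\<^sup>2)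
      = (1 - s\<^sup>2) * (x\<^sup>2 + y\<^sup>2) - 2 * x * ((1 - s\<^sup>2) * c) + (1 - s\<^sup>2) * (c\<^sup>2 - \<rho>\<^sup>2)"
    by (simp add: power2_eq_square algebra_simps)
  also have "\<dots> = (x - 1)\<^sup>2 + y\<^sup>2 - s\<^sup>2 * ((x + 1)\<^sup>2 + y\<^sup>2)"
    unfolding c c\<rho> by (simp add: power2_eq_square algebra_simps)
  finally show ?thesis
    unfolding c_def[symmetric] \<rho>_def[symmetric] l by (simp add: cmod_power2 power_mult_distrib)
qed

lemma cis_mult_mem_Omega_disc_iff:
  assumes "0 \<le> s" "s < 1"
  shows "cis \<theta> * l \<in> Omega_disc s \<theta> \<longleftrightarrow> cmod (l - 1) \<le> s * cmod (l + 1)"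
    and "cis \<theta> * l \<in> frontier (Omega_disc s \<theta>) \<longleftrightarrow> cmod (l - 1) = s * cmod (l + 1)"
proof -
  have "s\<^sup>2 < 1" using assms by (simp add: power_less_one_iff)
  have dist_rotate: "dist (cis \<theta> * a) (cis \<theta> * b) = cmod (b - a)" for a b
    by (simp add: dist_norm norm_mult norm_minus_commute flip: right_diff_distrib)
  note equiv = nonneg_le_iff_eq_iff_of_square_diff[OF _ _ _ _ _ apollonius_identity]
  show "cis \<theta> * l \<in> Omega_disc s \<theta> \<longleftrightarrow> cmod (l - 1) \<le> s * cmod (l + 1)"
    unfolding Omega_disc_def mem_cball dist_rotate using equiv(1) assms \<open>s\<^sup>2 < 1\<close> by simp
  show "cis \<theta> * l \<in> frontier (Omega_disc s \<theta>) \<longleftrightarrow> cmod (l - 1) = s * cmod (l + 1)"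
    unfolding Omega_disc_def frontier_cball mem_sphere dist_rotate
    using equiv(2) assms \<open>s\<^sup>2 < 1\<close> by simp
qed

definition cayley :: "complex \<Rightarrow> complex" where
  "cayley z = (1 + z) / (1 - z)"

lemma norm_cayley_minus_one:
  assumes "z \<noteq> 1"
  shows "cmod (cayley z - 1) = cmod z * cmod (cayley z + 1)"
proof -
  have "1 - z \<noteq> 0" using assms by simp
  then have "cayley z - 1 = 2 * z / (1 - z)" "cayley z + 1 = 2 / (1 - z)"
    by (simp_all add: cayley_def field_simps)
  then show ?thesis by (simp add: norm_mult norm_divide)
qed

lemma cayley_inverse:
  assumes "l \<noteq> -1"
  shows "cayley ((l - 1) / (l + 1)) = l"
proof -
  have nz: "l + 1 \<noteq> 0" using assms by (metis add.commute add_eq_0_iff)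
  then have "1 + (l - 1) / (l + 1) = 2 * l / (l + 1)" "1 - (l - 1) / (l + 1) = 2 / (l + 1)"
    by (simp_all add: field_simps)
  then show ?thesis using nz by (simp add: cayley_def)
qed

lemma cayley_mem_Omega_disc:
  assumes "cmod \<zeta> \<le> s" "s < 1"
  shows "cis \<theta> * cayley \<zeta> \<in> Omega_disc s \<theta>"
proof -
  have "\<zeta> \<noteq> 1" using assms by auto
  then have "cmod (cayley \<zeta> - 1) \<le> s * cmod (cayley \<zeta> + 1)"
    using assms by (simp add: norm_cayley_minus_one mult_right_mono)
  then show ?thesis using assms norm_ge_zero order_trans
    by (blast intro: cis_mult_mem_Omega_disc_iff(1)[THEN iffD2])
qed

lemma cayley_mem_frontier_Omega_disc:
  assumes "cmod \<zeta> = s" "s < 1"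
  shows "cis \<theta> * cayley \<zeta> \<in> frontier (Omega_disc s \<theta>)"
proof -
  have "\<zeta> \<noteq> 1" using assms by auto
  then have "cmod (cayley \<zeta> - 1) = s * cmod (cayley \<zeta> + 1)"
    using assms by (simp add: norm_cayley_minus_one)
  moreover have "0 \<le> s" using assms by auto
  ultimately show ?thesis using assms by (simp add: cis_mult_mem_Omega_disc_iff(2))
qed

lemma Omega_disc_subset_cayley_image:
  assumes "z \<in> Omega_disc r \<theta>" "0 \<le> r" "r < 1"
  obtains \<zeta> where "cmod \<zeta> \<le> r" "z = cis \<theta> * cayley \<zeta>"
proof -
  define l where "l = cnj (cis \<theta>) * z"
  have z: "z = cis \<theta> * l" by (simp add: l_def cis_cnj cis_mult)
  have le: "cmod (l - 1) \<le> r * cmod (l + 1)"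
    using assms cis_mult_mem_Omega_disc_iff(1)[of r \<theta> l] z by simp
  then have "l \<noteq> -1" by auto
  then have "cmod ((l - 1) / (l + 1)) \<le> r"
    using le assms(2) by (simp add: norm_divide divide_le_eq)
  moreover have "z = cis \<theta> * cayley ((l - 1) / (l + 1))"
    using z cayley_inverse[OF \<open>l \<noteq> -1\<close>] by simp
  ultimately show thesis by (rule that)
qed

text \<open>Near 0 the Cayley transform moves points off the unit circle at a rate comparable
  to their distance from the imaginary axis, which cayley maps onto the circle.\<close>

lemma abs_one_minus_norm_cayley_ge:
  assumes "cmod z \<le> 1/2"
  shows "4/9 * \<bar>Re z\<bar> \<le> \<bar>1 - cmod (cayley z)\<bar>"
proof -
  define d where "d = cmod (1 - z)"
  define a where "a = cmod (cayley z)"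
  have d_ge: "1/2 \<le> d" unfolding d_def using norm_triangle_ineq2[of 1 z] assms by simp
  have d_le: "d \<le> 3/2" unfolding d_def using norm_triangle_ineq4[of 1 z] assms by simp
  have "cmod (1 + z) \<le> 3/2" using norm_triangle_ineq[of 1 z] assms by simp
  have a: "a = cmod (1 + z) / d" unfolding a_def d_def cayley_def by (simp add: norm_divide)
  have "a \<le> 3" unfolding a using \<open>cmod (1 + z) \<le> 3/2\<close> d_ge by (simp add: divide_le_eq)
  have "a\<^sup>2 - 1 = ((cmod (1 + z))\<^sup>2 - d\<^sup>2) / d\<^sup>2"
    unfolding a using d_ge by (simp add: power_divide diff_divide_distrib)
  also have "(cmod (1 + z))\<^sup>2 - d\<^sup>2 = 4 * Re z"
    unfolding d_def cmod_power2 by (simp add: power2_eq_square algebra_simps)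
  finally have "a\<^sup>2 - 1 = 4 * Re z / d\<^sup>2" .
  moreover have "\<bar>1 - a\<bar> * (1 + a) = \<bar>a\<^sup>2 - 1\<bar>"
  proof -
    have "\<bar>1 - a\<bar> * (1 + a) = \<bar>(1 - a) * (1 + a)\<bar>" unfolding a_def by (simp add: abs_mult)
    also have "(1 - a) * (1 + a) = - (a\<^sup>2 - 1)" by (simp add: power2_eq_square algebra_simps)
    finally show ?thesis by simp
  qed
  ultimately have eq: "\<bar>1 - a\<bar> * (1 + a) = 4 * \<bar>Re z\<bar> / d\<^sup>2" by (simp add: abs_mult)
  have "d\<^sup>2 \<le> (3/2)\<^sup>2" using d_ge d_le by (intro power_mono) auto
  then have "4 * \<bar>Re z\<bar> / d\<^sup>2 \<ge> 4 * \<bar>Re z\<bar> / (3/2)\<^sup>2"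
    using d_ge by (intro divide_left_mono) auto
  then have "16/9 * \<bar>Re z\<bar> \<le> \<bar>1 - a\<bar> * (1 + a)" unfolding eq by (simp add: power2_eq_square)
  also have "\<dots> \<le> \<bar>1 - a\<bar> * 4" using \<open>a \<le> 3\<close> by (intro mult_left_mono) auto
  finally show ?thesis unfolding a_def by simp
qed

lemma complex_norming_functional:
  fixes J :: "'a::real_normed_vector \<Rightarrow> 'a" and x0 :: 'a
  assumes J: "complex_structure J"
  obtains \<phi> :: "'a \<Rightarrow> complex" where "bounded_linear \<phi>" "\<And>c x. \<phi> (cscale J c x) = c * \<phi> x"
    "\<And>x. cmod (\<phi> x) \<le> norm x" "cmod (\<phi> x0) = norm x0"
proof -
  obtain l where lin: "linear l" and le: "\<And>x. l x \<le> norm x" and lx0: "l x0 = norm x0"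
    using exists_norming_functional[of x0] by blast
  have linJ: "linear J" and JJ: "\<And>x. J (J x) = - x"
    and norm_cscale: "\<And>c x. norm (cscale J c x) = cmod c * norm x"
    using J unfolding complex_structure_def by auto
  define \<phi> where "\<phi> x = Complex (l x) (- l (J x))" for x
  have hom: "\<phi> (cscale J c x) = c * \<phi> x" for c x
  proof -
    have "l (cscale J c x) = Re c * l x + Im c * l (J x)"
      unfolding cscale_def using lin by (simp add: linear_add linear_scale)
    moreover have "J (cscale J c x) = Re c *\<^sub>R J x - Im c *\<^sub>R x"
      unfolding cscale_def using linJ JJ by (simp add: linear_add linear_scale)
    then have "l (J (cscale J c x)) = Re c * l (J x) - Im c * l x"
      using lin by (simp add: linear_diff linear_scale)
    ultimately show ?thesis by (simp add: \<phi>_def complex_eq_iff algebra_simps)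
  qed
  have norm_le: "cmod (\<phi> x) \<le> norm x" for x
  proof (cases "\<phi> x = 0")
    case False
    \<comment> \<open>rotate \<phi> x onto the positive axis, where cmod and Re agree\<close>
    define u where "u = cnj (\<phi> x) / cmod (\<phi> x)"
    have "cmod u = 1" using False by (simp add: u_def norm_divide)
    have "u * \<phi> x = cmod (\<phi> x)"
      using False by (simp add: u_def mult.commute[of "cnj _"] power2_eq_square flip: complex_norm_square)
    then have "cmod (\<phi> x) = Re (\<phi> (cscale J u x))" by (simp add: hom)
    also have "\<dots> = l (cscale J u x)" by (simp add: \<phi>_def)
    also have "\<dots> \<le> norm (cscale J u x)" by (rule le)
    also have "\<dots> = norm x" using norm_cscale \<open>cmod u = 1\<close> by simp
    finally show ?thesis .
  qed simp
  have "bounded_linear \<phi>"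
  proof (rule bounded_linear_intro[where K=1])
    show "\<phi> (x + y) = \<phi> x + \<phi> y" for x y
      unfolding \<phi>_def using lin linJ by (simp add: linear_add complex_eq_iff)
    show "\<phi> (r *\<^sub>R x) = r *\<^sub>R \<phi> x" for r x
      using hom[of "of_real r" x] by (simp add: cscale_def scaleR_conv_of_real)
  qed (simp add: norm_le)
  moreover have "cmod (\<phi> x0) = norm x0"
    using abs_Re_le_cmod[of "\<phi> x0"] norm_le[of x0] lx0 by (simp add: \<phi>_def)
  ultimately show thesis using that hom norm_le by blast
qed

lemma holomorphic_on_functional_compose:
  assumes F: "vholomorphic_on J F S"
    and \<phi>: "bounded_linear \<phi>" "\<And>c x. \<phi> (cscale J c x) = c * \<phi> x"
  shows "(\<lambda>z. \<phi> (F z)) holomorphic_on S"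
  unfolding holomorphic_on_def field_differentiable_def has_field_derivative_def
proof
  fix z assume "z \<in> S"
  then obtain D where "(F has_derivative (\<lambda>h. cscale J h D)) (at z within S)"
    using F unfolding vholomorphic_on_def by blast
  then have "((\<lambda>z. \<phi> (F z)) has_derivative (\<lambda>h. \<phi> (cscale J h D))) (at z within S)"
    by (rule bounded_linear.has_derivative[OF \<phi>(1)])
  moreover have "(\<lambda>h. \<phi> (cscale J h D)) = (*) (\<phi> D)" by (simp add: \<phi>(2) fun_eq_iff mult.commute)
  ultimately show "\<exists>D. ((\<lambda>z. \<phi> (F z)) has_derivative (*) D) (at z within S)" by auto
qed

lemma holomorphic_bound_from_circle_bound_over_Re:
  fixes k :: "complex \<Rightarrow> complex"
  assumes "0 < s" and k: "k holomorphic_on U" and "cball 0 s \<subseteq> U" and "0 \<le> B"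
    and bound: "\<And>\<zeta>. cmod \<zeta> = s \<Longrightarrow> Re \<zeta> \<noteq> 0 \<Longrightarrow> cmod (k \<zeta>) \<le> B / \<bar>Re \<zeta>\<bar>"
    and z: "cmod z \<le> s / 2"
  shows "cmod (k z) \<le> 8 * B / (3 * s)"
proof -
  define h where "h \<zeta> = (\<zeta>\<^sup>2 + (of_real s)\<^sup>2) * k \<zeta>" for \<zeta> :: complex
  have hol: "h holomorphic_on cball 0 s"
    unfolding h_def by (intro holomorphic_intros holomorphic_on_subset[OF k] \<open>cball 0 s \<subseteq> U\<close>)
  have "cmod (h z) \<le> 2 * B * s"
  proof (rule maximum_modulus_frontier[where f = h and S = "cball 0 s"])
    show "h holomorphic_on interior (cball 0 s)" by (rule holomorphic_on_subset[OF hol interior_subset])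
    show "continuous_on (closure (cball 0 s)) h" using hol by (simp add: holomorphic_on_imp_continuous_on)
    show "z \<in> cball 0 s" using z \<open>0 < s\<close> by simp
  next
    fix \<zeta> :: complex assume "\<zeta> \<in> frontier (cball 0 s)"
    then have "cmod \<zeta> = s" using \<open>0 < s\<close> by (simp add: frontier_cball)
    then have "(of_real s)\<^sup>2 = \<zeta> * cnj \<zeta>" using complex_norm_square[of \<zeta>] by simp
    then have "\<zeta>\<^sup>2 + (of_real s)\<^sup>2 = \<zeta> * (\<zeta> + cnj \<zeta>)" by (simp add: power2_eq_square distrib_left)
    then have "\<zeta>\<^sup>2 + (of_real s)\<^sup>2 = 2 * of_real (Re \<zeta>) * \<zeta>" by (simp add: complex_add_cnj)
    then have "cmod (h \<zeta>) = 2 * \<bar>Re \<zeta>\<bar> * s * cmod (k \<zeta>)"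
      using \<open>cmod \<zeta> = s\<close> \<open>0 < s\<close> by (simp add: h_def norm_mult)
    also have "\<dots> \<le> 2 * B * s"
      using bound[OF \<open>cmod \<zeta> = s\<close>] \<open>0 < s\<close> \<open>0 \<le> B\<close>
      by (cases "Re \<zeta> = 0") (simp_all add: field_simps mult_left_mono)
    finally show "cmod (h \<zeta>) \<le> 2 * B * s" .
  qed simp
  moreover have "3 * s\<^sup>2 / 4 \<le> cmod (z\<^sup>2 + (of_real s)\<^sup>2)"
  proof -
    have "cmod z ^ 2 \<le> (s / 2)\<^sup>2" using z by (intro power_mono) auto
    moreover have "cmod ((of_real s)\<^sup>2) - cmod (z\<^sup>2) \<le> cmod (z\<^sup>2 + (of_real s)\<^sup>2)"
      using norm_diff_ineq[of "(of_real s)\<^sup>2" "z\<^sup>2"] by (simp add: add.commute)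
    ultimately show ?thesis by (simp add: norm_power power_divide)
  qed
  then have "3 * s\<^sup>2 / 4 * cmod (k z) \<le> cmod (h z)"
    unfolding h_def norm_mult by (rule mult_right_mono) simp
  ultimately have "3 * s\<^sup>2 / 4 * cmod (k z) \<le> 2 * B * s" by linarith
  then show ?thesis using \<open>0 < s\<close> by (simp add: field_simps power2_eq_square)
qed

lemma holomorphic_bound_on_Omega_disc:
  fixes f :: "complex \<Rightarrow> complex"
  assumes f: "f holomorphic_on \<Omega>" and "open \<Omega>"
    and r: "0 < r" "r < 1/4" and sub: "Omega_disc (2 * r) \<theta> \<subseteq> \<Omega>" and "0 \<le> B"
    and bound: "\<And>w. w \<in> frontier (Omega_disc (2 * r) \<theta>) - sphere 0 1 \<Longrightarrow> cmod (f w) \<le> B / \<bar>1 - cmod w\<bar>"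
    and z: "z \<in> Omega_disc r \<theta>"
  shows "cmod (f z) \<le> 3 * B / r"
proof -
  define s where "s = 2 * r"
  have s: "0 < s" "s < 1/2" using r by (auto simp: s_def)
  define M where "M \<zeta> = cis \<theta> * cayley \<zeta>" for \<zeta>
  define U where "U = ball 0 1 \<inter> M -` \<Omega>"
  have "continuous_on (ball 0 1) M" "M holomorphic_on ball 0 1"
    unfolding M_def cayley_def by (auto intro!: continuous_intros holomorphic_intros)
  then have "open U" "M holomorphic_on U"
    using continuous_open_preimage[OF _ open_ball \<open>open \<Omega>\<close>] holomorphic_on_subset
    by (auto simp: U_def)
  then have hol: "(f \<circ> M) holomorphic_on U"
    using holomorphic_on_compose_gen[OF _ f] by (auto simp: U_def)
  have cball_U: "cball 0 s \<subseteq> U"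
  proof
    fix \<zeta> :: complex assume "\<zeta> \<in> cball 0 s"
    then have "cmod \<zeta> \<le> s" by simp
    then have "M \<zeta> \<in> \<Omega>" using cayley_mem_Omega_disc[of \<zeta> s \<theta>] sub s by (auto simp: M_def s_def)
    then show "\<zeta> \<in> U" using \<open>cmod \<zeta> \<le> s\<close> s by (simp add: U_def)
  qed
  have circle_bound: "cmod ((f \<circ> M) \<zeta>) \<le> (9/4 * B) / \<bar>Re \<zeta>\<bar>" if "cmod \<zeta> = s" "Re \<zeta> \<noteq> 0" for \<zeta>
  proof -
    have "4/9 * \<bar>Re \<zeta>\<bar> \<le> \<bar>1 - cmod (M \<zeta>)\<bar>"
      using abs_one_minus_norm_cayley_ge[of \<zeta>] that s by (simp add: M_def norm_mult)
    moreover have "M \<zeta> \<in> frontier (Omega_disc (2 * r) \<theta>)"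
      using cayley_mem_frontier_Omega_disc that s by (simp add: M_def s_def)
    moreover have "0 < 4/9 * \<bar>Re \<zeta>\<bar>" using \<open>Re \<zeta> \<noteq> 0\<close> by simp
    ultimately have "cmod (f (M \<zeta>)) \<le> B / \<bar>1 - cmod (M \<zeta>)\<bar>"
      using bound[of "M \<zeta>"] by fastforce
    also have "\<dots> \<le> B / (4/9 * \<bar>Re \<zeta>\<bar>)"
      using \<open>0 < 4/9 * \<bar>Re \<zeta>\<bar>\<close> \<open>4/9 * \<bar>Re \<zeta>\<bar> \<le> \<bar>1 - cmod (M \<zeta>)\<bar>\<close> \<open>0 \<le> B\<close>
      by (intro divide_left_mono mult_pos_pos) auto
    finally show ?thesis by simp
  qed
  obtain \<zeta>0 where "cmod \<zeta>0 \<le> r" "z = M \<zeta>0"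
    using Omega_disc_subset_cayley_image[OF z] r by (auto simp: M_def)
  then have "cmod (f z) \<le> 8 * (9/4 * B) / (3 * s)"
    using holomorphic_bound_from_circle_bound_over_Re[OF \<open>0 < s\<close> hol cball_U _ circle_bound, of \<zeta>0]
      \<open>0 \<le> B\<close> by (simp add: s_def)
  also have "\<dots> = 3 * B / r" using r by (simp add: s_def field_simps)
  finally show ?thesis .
qed

lemma vholomorphic_bound_on_Omega_disc:
  fixes F :: "complex \<Rightarrow> 'a::real_normed_vector"
  assumes J: "complex_structure J" and F: "vholomorphic_on J F \<Omega>" and "open \<Omega>"
    and r: "0 < r" "r < 1/4" and sub: "Omega_disc (2 * r) \<theta> \<subseteq> \<Omega>" and "0 \<le> B"
    and bound: "\<And>w. w \<in> frontier (Omega_disc (2 * r) \<theta>) - sphere 0 1 \<Longrightarrow> norm (F w) \<le> B / \<bar>1 - cmod w\<bar>"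
    and z: "z \<in> Omega_disc r \<theta>"
  shows "norm (F z) \<le> 3 * B / r"
proof -
  obtain \<phi> where \<phi>: "bounded_linear \<phi>" "\<And>c x. \<phi> (cscale J c x) = c * \<phi> x"
    and \<phi>_le: "\<And>x. cmod (\<phi> x) \<le> norm x" and \<phi>_Fz: "cmod (\<phi> (F z)) = norm (F z)"
    using complex_norming_functional[OF J] by metis
  have "cmod (\<phi> (F z)) \<le> 3 * B / r"
  proof (rule holomorphic_bound_on_Omega_disc[OF _ \<open>open \<Omega>\<close> r sub \<open>0 \<le> B\<close> _ z])
    show "(\<lambda>z. \<phi> (F z)) holomorphic_on \<Omega>" by (rule holomorphic_on_functional_compose[OF F \<phi>])
    show "cmod (\<phi> (F w)) \<le> B / \<bar>1 - cmod w\<bar>"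
      if "w \<in> frontier (Omega_disc (2 * r) \<theta>) - sphere 0 1" for w
      using order_trans[OF \<phi>_le bound[OF that]] .
  qed
  then show ?thesis using \<phi>_Fz by simp
qed

theorem lemma3p3:
  fixes J :: "'a::banach \<Rightarrow> 'a" and \<theta> :: real and \<Omega> :: "complex set"
  assumes "complex_structure J"
    and "- pi < \<theta>" and "\<theta> \<le> pi"
    and "open \<Omega>" and "cis \<theta> \<in> \<Omega>"
  shows "\<exists>C>0. \<forall>(r::real) (F::complex \<Rightarrow> 'a) (B::real).
           0 < r \<and> r < 1/4 \<and> Omega_disc (2 * r) \<theta> \<subseteq> \<Omega> \<and>
           vholomorphic_on J F \<Omega> \<and> 0 < B \<and>
           (\<forall>z \<in> frontier (Omega_disc (2 * r) \<theta>) - sphere 0 1.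
               norm (F z) \<le> B / \<bar>1 - cmod z\<bar>)
           \<longrightarrow> (\<forall>z \<in> Omega_disc r \<theta>. norm (F z) \<le> B * C / r)"
proof (intro exI[of _ 3] conjI allI impI ballI)
  fix r B and F :: "complex \<Rightarrow> 'a" and z
  assume "0 < r \<and> r < 1/4 \<and> Omega_disc (2 * r) \<theta> \<subseteq> \<Omega> \<and> vholomorphic_on J F \<Omega> \<and> 0 < B \<and>
      (\<forall>z \<in> frontier (Omega_disc (2 * r) \<theta>) - sphere 0 1. norm (F z) \<le> B / \<bar>1 - cmod z\<bar>)"
    and "z \<in> Omega_disc r \<theta>"
  then have "norm (F z) \<le> 3 * B / r"
    by (intro vholomorphic_bound_on_Omega_disc[OF \<open>complex_structure J\<close> _ \<open>open \<Omega>\<close>]) auto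
  then show "norm (F z) \<le> B * 3 / r" by (simp add: mult.commute)
qed simp

end
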